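(* Let $G$ be a non-trivial connected graph, and let $k$ be a positive integer. Then $\dim_{k,f}(G)=1$ if and only if $G$ is isomorphic to the path $P_i$ for some $i\in\{2,3,\ldots,k+2\}$.
   Context: All graphs are finite, simple, undirected and connected; $P_i$ denotes the path on $i$ vertices. $d(x,y)$ is the length of a shortest $x$–$y$ path in $G$. For a positive integer $k$, $d_k(x,y)=\min\{d(x,y),k+1\}$ and $R_k\{x,y\}=\{z\in V(G): d_k(x,z)\neq d_k(y,z)\}$. For a function $g$ on $V(G)$ and $U\subseteq V(G)$, $g(U)=\sum_{s\in U}g(s)$. A function $h:V(G)\to[0,1]$ is a $k$-truncated resolving function of $G$ if $h(R_k\{x,y\})\ge 1$ for all distinct $x,y\in V(G)$. $\dim_{k,f}(G)=\min\{h(V(G)): h \text{ is a } k\text{-truncated resolving function of } G\}$. *)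

theory Defs
  imports "HOL-Analysis.Analysis"
begin

fun is_walk :: "('a \<Rightarrow> 'a \<Rightarrow> bool) \<Rightarrow> 'a list \<Rightarrow> bool" where
  "is_walk E [] = False"
| "is_walk E [x] = True"
| "is_walk E (x # y # xs) = (E x y \<and> is_walk E (y # xs))"

definition simple_graph :: "'a set \<Rightarrow> ('a \<Rightarrow> 'a \<Rightarrow> bool) \<Rightarrow> bool" where
  "simple_graph V E \<longleftrightarrow> finite V \<and> (\<forall>x y. E x y \<longrightarrow> x \<in> V \<and> y \<in> V)
     \<and> (\<forall>x y. E x y \<longrightarrow> E y x) \<and> (\<forall>x. \<not> E x x)"

definition connected_graph :: "'a set \<Rightarrow> ('a \<Rightarrow> 'a \<Rightarrow> bool) \<Rightarrow> bool" where
  "connected_graph V E \<longleftrightarrow> V \<noteq> {} \<and> (\<forall>x\<in>V. \<forall>y\<in>V. \<exists>p. is_walk E p \<and> set p \<subseteq> V \<and> hd p = x \<and> last p = y)"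

(* d(x,y): length (number of edges) of a shortest x-y walk *)
definition gdist :: "'a set \<Rightarrow> ('a \<Rightarrow> 'a \<Rightarrow> bool) \<Rightarrow> 'a \<Rightarrow> 'a \<Rightarrow> nat" where
  "gdist V E x y = (LEAST n. \<exists>p. is_walk E p \<and> set p \<subseteq> V \<and> hd p = x \<and> last p = y \<and> length p = Suc n)"

definition tdist :: "'a set \<Rightarrow> ('a \<Rightarrow> 'a \<Rightarrow> bool) \<Rightarrow> nat \<Rightarrow> 'a \<Rightarrow> 'a \<Rightarrow> nat" where
  "tdist V E k x y = min (gdist V E x y) (k + 1)"

definition Rk :: "'a set \<Rightarrow> ('a \<Rightarrow> 'a \<Rightarrow> bool) \<Rightarrow> nat \<Rightarrow> 'a \<Rightarrow> 'a \<Rightarrow> 'a set" where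
  "Rk V E k x y = {z \<in> V. tdist V E k x z \<noteq> tdist V E k y z}"

definition k_trunc_resolving_fn :: "'a set \<Rightarrow> ('a \<Rightarrow> 'a \<Rightarrow> bool) \<Rightarrow> nat \<Rightarrow> ('a \<Rightarrow> real) \<Rightarrow> bool" where
  "k_trunc_resolving_fn V E k h \<longleftrightarrow>
     (\<forall>z\<in>V. 0 \<le> h z \<and> h z \<le> 1) \<and>
     (\<forall>x\<in>V. \<forall>y\<in>V. x \<noteq> y \<longrightarrow> sum h (Rk V E k x y) \<ge> 1)"

definition dim_kf :: "'a set \<Rightarrow> ('a \<Rightarrow> 'a \<Rightarrow> bool) \<Rightarrow> nat \<Rightarrow> real" where
  "dim_kf V E k = Inf {sum h V | h. k_trunc_resolving_fn V E k h}"

definition iso_to_path :: "'a set \<Rightarrow> ('a \<Rightarrow> 'a \<Rightarrow> bool) \<Rightarrow> nat \<Rightarrow> bool" where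
  "iso_to_path V E i \<longleftrightarrow> (\<exists>f. bij_betw f V {0..<i} \<and>
     (\<forall>x\<in>V. \<forall>y\<in>V. E x y \<longleftrightarrow> (f x = f y + 1 \<or> f y = f x + 1)))"

end

theory Submission
  imports Defs
begin

(* Call z a resolving vertex when v \<mapsto> d_k(v,z) is injective on V. If one exists, the
   indicator of z is a resolving function of weight 1, and none weighs less. If none exists,
   each vertex z fails to distinguish some pair x, y, so R_k{x,y} avoids z yet has weight at
   least 1; summing over z gives n \<le> (n - 1) h(V), hence dim_{k,f}(G) \<ge> n/(n - 1) > 1.
   For a resolving vertex z, v \<mapsto> d(v,z) is injective as well; its image is downward closed,
   hence {0,...,n-1}, so the distance layers from z are single vertices joined consecutively and
   G is the path P_n. Distances k + 1 and k + 2 would collide after truncation, so n \<le> k + 2. *)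

definition truncated_resolving_vertex :: "'a set \<Rightarrow> ('a \<Rightarrow> 'a \<Rightarrow> bool) \<Rightarrow> nat \<Rightarrow> 'a \<Rightarrow> bool" where
  "truncated_resolving_vertex V E k z \<longleftrightarrow> z \<in> V \<and> inj_on (\<lambda>v. tdist V E k v z) V"

lemma downward_closed_nat_set_eq_lessThan:
  fixes S :: "nat set"
  assumes "finite S" and down: "\<And>m n. m \<in> S \<Longrightarrow> n \<le> m \<Longrightarrow> n \<in> S"
  shows "S = {..<card S}"
proof -
  have "S \<subseteq> {..<card S}"
  proof
    fix m assume "m \<in> S"
    then have "{..m} \<subseteq> S" using down by auto
    then have "card {..m} \<le> card S" using assms(1) by (rule card_mono[rotated])
    then show "m \<in> {..<card S}" by simp
  qed
  then show ?thesis by (intro card_subset_eq) auto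
qed

lemma avoiding_sets_weight_bound:
  fixes h :: "'a \<Rightarrow> real"
  assumes "finite V" and nonneg: "\<And>z. z \<in> V \<Longrightarrow> 0 \<le> h z"
    and avoid: "\<And>z. z \<in> V \<Longrightarrow> R z \<subseteq> V - {z}"
    and heavy: "\<And>z. z \<in> V \<Longrightarrow> 1 \<le> sum h (R z)"
  shows "real (card V) \<le> (real (card V) - 1) * sum h V"
proof -
  have "real (card V) = (\<Sum>z\<in>V. 1)" by simp
  also have "\<dots> \<le> (\<Sum>z\<in>V. sum h (V - {z}))"
  proof (rule sum_mono)
    fix z assume "z \<in> V"
    then have "sum h (R z) \<le> sum h (V - {z})"
      using assms(1) nonneg avoid by (intro sum_mono2) auto
    with heavy \<open>z \<in> V\<close> show "1 \<le> sum h (V - {z})" by fastforce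
  qed
  also have "\<dots> = (\<Sum>z\<in>V. sum h V - h z)"
    using assms(1) by (intro sum.cong) (simp_all add: sum_diff1)
  also have "\<dots> = (real (card V) - 1) * sum h V"
    by (simp add: sum_subtractf algebra_simps)
  finally show ?thesis .
qed

lemma is_walk_not_Nil: "is_walk E p \<Longrightarrow> p \<noteq> []"
  by (cases p) auto

lemma walk_lipschitz:
  fixes f :: "'a \<Rightarrow> nat"
  assumes "\<And>x y. E x y \<Longrightarrow> f x \<le> Suc (f y)"
  shows "is_walk E p \<Longrightarrow> f (hd p) \<le> f (last p) + (length p - 1)"
proof (induction p rule: induct_list012)
  case (3 x y zs)
  then have "E x y" "f y \<le> f (last (y # zs)) + length zs"
    by simp_all
  with assms[of x y] show ?case
    by simp
qed simp_all

locale connected_simple_graph =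
  fixes V :: "'a set" and E :: "'a \<Rightarrow> 'a \<Rightarrow> bool"
  assumes simple: "simple_graph V E" and connected: "connected_graph V E"
begin

lemma finite_V: "finite V"
  using simple by (simp add: simple_graph_def)

lemma edge_in_V: "E x y \<Longrightarrow> x \<in> V \<and> y \<in> V"
  using simple by (simp add: simple_graph_def)

lemma edge_sym: "E x y \<Longrightarrow> E y x"
  using simple by (simp add: simple_graph_def)

lemma edge_irrefl: "\<not> E x x"
  using simple by (simp add: simple_graph_def)

lemma shortest_walk_exists:
  assumes "x \<in> V" "y \<in> V"
  obtains p where "is_walk E p" "set p \<subseteq> V" "hd p = x" "last p = y"
    "length p = Suc (gdist V E x y)"
proof -
  obtain p where p: "is_walk E p" "set p \<subseteq> V" "hd p = x" "last p = y"
    using connected assms unfolding connected_graph_def by blast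
  then have "length p = Suc (length p - 1)"
    using is_walk_not_Nil by (cases p) auto
  with p have "\<exists>n p. is_walk E p \<and> set p \<subseteq> V \<and> hd p = x \<and> last p = y \<and> length p = Suc n"
    by blast
  from LeastI_ex[OF this] show thesis
    using that unfolding gdist_def by blast
qed

lemma gdist_le_walk:
  assumes "is_walk E p" "set p \<subseteq> V" "hd p = x" "last p = y"
  shows "gdist V E x y \<le> length p - 1"
proof -
  have "length p = Suc (length p - 1)"
    using assms is_walk_not_Nil by (cases p) auto
  with assms show ?thesis
    unfolding gdist_def by (intro Least_le) metis
qed

lemma gdist_eq_0_iff:
  assumes "x \<in> V" "y \<in> V"
  shows "gdist V E x y = 0 \<longleftrightarrow> x = y"
proof
  assume "gdist V E x y = 0"
  then obtain p where "hd p = x" "last p = y" "length p = Suc 0"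
    using shortest_walk_exists[OF assms] by metis
  then show "x = y" by (cases p) auto
next
  assume "x = y"
  then show "gdist V E x y = 0"
    using gdist_le_walk[of "[x]" x x] assms by simp
qed

lemma gdist_edge_le:
  assumes "E a b" "z \<in> V"
  shows "gdist V E a z \<le> Suc (gdist V E b z)"
proof -
  obtain p where p: "is_walk E p" "set p \<subseteq> V" "hd p = b" "last p = z"
      "length p = Suc (gdist V E b z)"
    using shortest_walk_exists edge_in_V assms by metis
  then obtain q where "p = b # q" by (cases p) auto
  with p assms have "gdist V E a z \<le> length (a # p) - 1"
    using edge_in_V by (intro gdist_le_walk) auto
  with p show ?thesis by simp
qed

lemma gdist_Suc_neighbour:
  assumes "v \<in> V" "z \<in> V" "gdist V E v z = Suc m"
  obtains w where "E v w" "gdist V E w z = m"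
proof -
  obtain p where p: "is_walk E p" "set p \<subseteq> V" "hd p = v" "last p = z"
      "length p = Suc (Suc m)"
    using shortest_walk_exists[OF assms(1,2)] assms(3) by metis
  then obtain w q where p_eq: "p = v # w # q"
    by (cases p; cases "tl p") auto
  with p have "E v w" "gdist V E w z \<le> m"
    using gdist_le_walk[of "w # q" w z] by auto
  moreover have "m \<le> gdist V E w z"
    using gdist_edge_le[OF \<open>E v w\<close> assms(2)] assms(3) by simp
  ultimately show thesis
    using that by simp
qed

lemma gdist_intermediate:
  assumes "v \<in> V" "z \<in> V" "j \<le> gdist V E v z"
  shows "\<exists>u\<in>V. gdist V E u z = j"
  using assms
proof (induction "gdist V E v z" arbitrary: v)
  case 0
  then show ?case by auto
next
  case (Suc m)
  show ?case
  proof (cases "j = Suc m")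
    case True
    then show ?thesis
      using Suc.prems(1) Suc.hyps(2) by auto
  next
    case False
    with Suc.prems(3) Suc.hyps(2) have "j \<le> m" by simp
    obtain w where "E v w" "gdist V E w z = m"
      using gdist_Suc_neighbour[OF Suc.prems(1,2) Suc.hyps(2)[symmetric]] .
    with Suc.hyps(1)[of w] Suc.prems(2) \<open>j \<le> m\<close> edge_in_V show ?thesis
      by auto
  qed
qed

lemma gdist_lower_bound:
  fixes f :: "'a \<Rightarrow> nat"
  assumes "\<And>x y. E x y \<Longrightarrow> f x \<le> Suc (f y)" "x \<in> V" "y \<in> V"
  shows "f x \<le> f y + gdist V E x y"
proof -
  obtain p where "is_walk E p" "hd p = x" "last p = y" "length p = Suc (gdist V E x y)"
    using shortest_walk_exists assms(2,3) by metis
  then show ?thesis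
    using walk_lipschitz[of E f p] assms(1) by simp
qed

lemma gdist_image_eq_lessThan:
  assumes "z \<in> V" and inj: "inj_on (\<lambda>v. gdist V E v z) V"
  shows "(\<lambda>v. gdist V E v z) ` V = {..<card V}"
proof -
  have "n \<in> (\<lambda>v. gdist V E v z) ` V"
    if m: "m \<in> (\<lambda>v. gdist V E v z) ` V" and "n \<le> m" for m n
  proof -
    obtain v where "v \<in> V" "m = gdist V E v z"
      using m by blast
    with \<open>n \<le> m\<close> obtain u where "u \<in> V" "gdist V E u z = n"
      using gdist_intermediate assms(1) by blast
    then show ?thesis
      by blast
  qed
  then have "(\<lambda>v. gdist V E v z) ` V = {..<card ((\<lambda>v. gdist V E v z) ` V)}"
    using finite_V by (intro downward_closed_nat_set_eq_lessThan) auto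
  with card_image[OF inj] show ?thesis by simp
qed

lemma iso_to_path_if_inj_gdist:
  assumes "z \<in> V" and inj: "inj_on (\<lambda>v. gdist V E v z) V"
  shows "iso_to_path V E (card V)"
proof -
  define d where "d = (\<lambda>v. gdist V E v z)"
  have bij: "bij_betw d V {0..<card V}"
    using gdist_image_eq_lessThan[OF assms] inj
    by (simp add: bij_betw_def d_def atLeast0LessThan)
  have "E x y \<longleftrightarrow> d x = d y + 1 \<or> d y = d x + 1" if "x \<in> V" "y \<in> V" for x y
  proof
    assume "E x y"
    then have "d x \<noteq> d y"
      using inj_onD[OF inj, of x y] that edge_irrefl unfolding d_def by auto
    moreover have "d x \<le> Suc (d y)" "d y \<le> Suc (d x)"
      using gdist_edge_le \<open>E x y\<close> edge_sym assms(1) unfolding d_def by auto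
    ultimately show "d x = d y + 1 \<or> d y = d x + 1" by linarith
  next
    have "E a b" if "a \<in> V" "b \<in> V" and layer: "d a = d b + 1" for a b
    proof -
      obtain w where "E a w" "d w = d b"
        using gdist_Suc_neighbour[OF \<open>a \<in> V\<close> assms(1)] layer unfolding d_def by auto
      moreover from this have "w = b"
        using inj_onD[OF inj, of w b] \<open>b \<in> V\<close> edge_in_V unfolding d_def by auto
      ultimately show ?thesis by simp
    qed
    then show "d x = d y + 1 \<or> d y = d x + 1 \<Longrightarrow> E x y"
      using that edge_sym by blast
  qed
  with bij show ?thesis
    unfolding iso_to_path_def by blast
qed

lemma inj_gdist_if_truncated_resolving_vertex:
  assumes "truncated_resolving_vertex V E k z"
  shows "inj_on (\<lambda>v. gdist V E v z) V"
proof -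
  have "inj_on ((\<lambda>n. min n (k + 1)) \<circ> (\<lambda>v. gdist V E v z)) V"
    using assms by (simp add: truncated_resolving_vertex_def tdist_def o_def)
  then show ?thesis by (rule inj_on_imageI2)
qed

lemma card_le_if_truncated_resolving_vertex:
  assumes "truncated_resolving_vertex V E k z"
  shows "card V \<le> k + 2"
proof (rule ccontr)
  assume "\<not> card V \<le> k + 2"
  have z: "z \<in> V" and inj: "inj_on (\<lambda>v. tdist V E k v z) V"
    using assms by (simp_all add: truncated_resolving_vertex_def)
  have img: "(\<lambda>v. gdist V E v z) ` V = {..<card V}"
    using gdist_image_eq_lessThan[OF z inj_gdist_if_truncated_resolving_vertex[OF assms]] .
  with \<open>\<not> card V \<le> k + 2\<close> have "k + 1 \<in> (\<lambda>v. gdist V E v z) ` V"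
    by simp
  then obtain u1 where u1: "k + 1 = gdist V E u1 z" "u1 \<in> V"
    by (rule imageE)
  from img \<open>\<not> card V \<le> k + 2\<close> have "k + 2 \<in> (\<lambda>v. gdist V E v z) ` V"
    by simp
  then obtain u2 where u2: "k + 2 = gdist V E u2 z" "u2 \<in> V"
    by (rule imageE)
  have "tdist V E k u1 z = tdist V E k u2 z"
    using u1(1)[symmetric] u2(1)[symmetric] by (simp add: tdist_def)
  then have "u1 = u2"
    using inj_onD[OF inj] u1(2) u2(2) by blast
  with u1 u2 show False
    by simp
qed

lemma gdist_to_path_end:
  assumes bij: "bij_betw f V {0..<i}"
    and edges: "\<forall>x\<in>V. \<forall>y\<in>V. E x y \<longleftrightarrow> (f x = f y + 1 \<or> f y = f x + 1)"
    and v0: "v0 \<in> V" "f v0 = 0" and "x \<in> V"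
  shows "gdist V E x v0 = f x"
proof (rule order.antisym)
  have lipschitz: "f a \<le> Suc (f b)" if "E a b" for a b
  proof -
    have "a \<in> V" "b \<in> V"
      using edge_in_V[OF that] by simp_all
    with edges that have "f a = f b + 1 \<or> f b = f a + 1"
      by blast
    then show ?thesis
      by linarith
  qed
  show "f x \<le> gdist V E x v0"
    using gdist_lower_bound[of f, OF lipschitz \<open>x \<in> V\<close> v0(1)] v0(2) by simp
  show "gdist V E x v0 \<le> f x"
    using \<open>x \<in> V\<close>
  proof (induction "f x" arbitrary: x)
    case 0
    then have "x = v0"
      using inj_onD[OF bij_betw_imp_inj_on[OF bij] _ _ v0(1)] v0(2) by simp
    then show ?case
      using gdist_eq_0_iff v0 by simp
  next
    case (Suc n x)
    have "f x < i"
      using bij_betwE[OF bij] Suc.prems by auto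
    then have "n \<in> f ` V"
      using bij_betw_imp_surj_on[OF bij] Suc.hyps(2) by auto
    then obtain y where y: "y \<in> V" "f y = n"
      by blast
    have edge: "E x y"
      using edges[rule_format, OF Suc.prems y(1)] y(2) Suc.hyps(2) by simp
    have "gdist V E y v0 \<le> n"
      using Suc.hyps(1)[OF y(2)[symmetric] y(1)] y(2) by simp
    then show ?case
      using gdist_edge_le[OF edge v0(1)] Suc.hyps(2) by simp
  qed
qed

lemma truncated_resolving_vertex_if_path:
  assumes "iso_to_path V E i" "1 \<le> i" "i \<le> k + 2"
  shows "\<exists>z. truncated_resolving_vertex V E k z"
proof -
  obtain f where bij: "bij_betw f V {0..<i}"
    and edges: "\<forall>x\<in>V. \<forall>y\<in>V. E x y \<longleftrightarrow> (f x = f y + 1 \<or> f y = f x + 1)"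
    using assms(1) unfolding iso_to_path_def by blast
  have "0 \<in> f ` V"
    using bij_betw_imp_surj_on[OF bij] assms(2) by simp
  then obtain v0 where v0: "v0 \<in> V" "f v0 = 0"
    by force
  have "tdist V E k x v0 = f x" if "x \<in> V" for x
  proof -
    have "f x < i"
      using bij_betwE[OF bij] that by auto
    with gdist_to_path_end[OF bij edges v0 that] assms(3) show ?thesis
      by (simp add: tdist_def)
  qed
  then have "inj_on (\<lambda>x. tdist V E k x v0) V"
    using bij by (simp add: bij_betw_def inj_on_def)
  with v0 show ?thesis
    unfolding truncated_resolving_vertex_def by blast
qed

lemma truncated_resolving_vertex_iff_path:
  assumes "card V \<ge> 2"
  shows "(\<exists>z. truncated_resolving_vertex V E k z) \<longleftrightarrow> (\<exists>i\<in>{2..k+2}. iso_to_path V E i)"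
proof
  assume "\<exists>z. truncated_resolving_vertex V E k z"
  then obtain z where z: "truncated_resolving_vertex V E k z" ..
  then have "iso_to_path V E (card V)"
    using iso_to_path_if_inj_gdist inj_gdist_if_truncated_resolving_vertex[OF z]
    unfolding truncated_resolving_vertex_def by blast
  with card_le_if_truncated_resolving_vertex[OF z] assms show "\<exists>i\<in>{2..k+2}. iso_to_path V E i"
    by auto
next
  assume "\<exists>i\<in>{2..k+2}. iso_to_path V E i"
  then show "\<exists>z. truncated_resolving_vertex V E k z"
    using truncated_resolving_vertex_if_path by fastforce
qed

lemma resolving_fn_sum_ge_1:
  assumes "card V \<ge> 2" "k_trunc_resolving_fn V E k h"
  shows "1 \<le> sum h V"
proof -
  obtain x where "x \<in> V"
    using assms(1) by fastforce
  moreover have "\<not> V \<subseteq> {x}"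
    using assms(1) card_mono[of "{x}" V] by auto
  ultimately obtain y where "y \<in> V" "x \<noteq> y"
    by blast
  with \<open>x \<in> V\<close> have "1 \<le> sum h (Rk V E k x y)"
    using assms(2) unfolding k_trunc_resolving_fn_def by blast
  also have "\<dots> \<le> sum h V"
    using assms(2) finite_V unfolding k_trunc_resolving_fn_def Rk_def
    by (intro sum_mono2) auto
  finally show ?thesis .
qed

lemma const_one_resolving_fn: "k_trunc_resolving_fn V E k (\<lambda>_. 1)"
  unfolding k_trunc_resolving_fn_def
proof (intro conjI ballI impI)
  fix x y assume "x \<in> V" "y \<in> V" "x \<noteq> y"
  then have "x \<in> Rk V E k x y"
    using gdist_eq_0_iff[of x x] gdist_eq_0_iff[of y x] by (simp add: Rk_def tdist_def)
  moreover have "finite (Rk V E k x y)"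
    using finite_V by (simp add: Rk_def)
  ultimately show "1 \<le> sum (\<lambda>_. 1::real) (Rk V E k x y)"
    by (auto simp: Suc_le_eq card_gt_0_iff)
qed auto

lemma dim_kf_eq_1_if_truncated_resolving_vertex:
  assumes "card V \<ge> 2" "truncated_resolving_vertex V E k z"
  shows "dim_kf V E k = 1"
proof -
  define h :: "'a \<Rightarrow> real" where "h v = (if v = z then 1 else 0)" for v
  have "k_trunc_resolving_fn V E k h"
    unfolding k_trunc_resolving_fn_def
  proof (intro conjI ballI impI)
    fix x y assume "x \<in> V" "y \<in> V" "x \<noteq> y"
    then have "z \<in> Rk V E k x y"
      using assms(2) unfolding truncated_resolving_vertex_def Rk_def by (auto dest: inj_onD)
    moreover have "finite (Rk V E k x y)"
      using finite_V by (simp add: Rk_def)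
    ultimately show "1 \<le> sum h (Rk V E k x y)"
      by (simp add: h_def)
  qed (simp_all add: h_def)
  moreover have "sum h V = 1"
    using finite_V assms(2) by (simp add: h_def truncated_resolving_vertex_def)
  ultimately show ?thesis
    unfolding dim_kf_def using resolving_fn_sum_ge_1[OF assms(1)]
    by (intro cInf_eq_minimum) auto
qed

lemma resolving_fn_sum_bound_if_no_resolving_vertex:
  assumes "\<nexists>z. truncated_resolving_vertex V E k z" "k_trunc_resolving_fn V E k h"
  shows "real (card V) \<le> (real (card V) - 1) * sum h V"
proof -
  have "\<forall>z\<in>V. \<exists>x y. x \<in> V \<and> y \<in> V \<and> x \<noteq> y \<and> tdist V E k x z = tdist V E k y z"
    using assms(1) unfolding truncated_resolving_vertex_def inj_on_def by blast
  then obtain X Y where XY: "\<And>z. z \<in> V \<Longrightarrow>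
      X z \<in> V \<and> Y z \<in> V \<and> X z \<noteq> Y z \<and> tdist V E k (X z) z = tdist V E k (Y z) z"
    by metis
  show ?thesis
  proof (rule avoiding_sets_weight_bound[where R = "\<lambda>z. Rk V E k (X z) (Y z)"])
    show "Rk V E k (X z) (Y z) \<subseteq> V - {z}" if "z \<in> V" for z
      using XY[OF that] by (auto simp: Rk_def)
    show "1 \<le> sum h (Rk V E k (X z) (Y z))" if "z \<in> V" for z
      using XY[OF that] assms(2) unfolding k_trunc_resolving_fn_def by blast
  qed (use finite_V assms(2) in \<open>auto simp: k_trunc_resolving_fn_def\<close>)
qed

lemma dim_kf_ge_if_no_resolving_vertex:
  assumes "card V \<ge> 2" "\<nexists>z. truncated_resolving_vertex V E k z"
  shows "real (card V) / (real (card V) - 1) \<le> dim_kf V E k"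
  unfolding dim_kf_def
proof (rule cInf_greatest)
  show "{sum h V |h. k_trunc_resolving_fn V E k h} \<noteq> {}"
    using const_one_resolving_fn by blast
  fix s assume "s \<in> {sum h V |h. k_trunc_resolving_fn V E k h}"
  then show "real (card V) / (real (card V) - 1) \<le> s"
    using resolving_fn_sum_bound_if_no_resolving_vertex[OF assms(2)] assms(1)
    by (auto simp: divide_le_eq mult.commute)
qed

lemma dim_kf_eq_1_iff_truncated_resolving_vertex:
  assumes "card V \<ge> 2"
  shows "dim_kf V E k = 1 \<longleftrightarrow> (\<exists>z. truncated_resolving_vertex V E k z)"
proof
  assume "dim_kf V E k = 1"
  moreover have "1 < real (card V) / (real (card V) - 1)"
    using assms by simp
  ultimately show "\<exists>z. truncated_resolving_vertex V E k z"
    using dim_kf_ge_if_no_resolving_vertex[OF assms] by fastforce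
qed (use dim_kf_eq_1_if_truncated_resolving_vertex assms in blast)

end

theorem theorem2p7:
  fixes V :: "'a set" and E :: "'a \<Rightarrow> 'a \<Rightarrow> bool" and k :: nat
  assumes "simple_graph V E" and "connected_graph V E" and "card V \<ge> 2" and "k \<ge> 1"
  shows "dim_kf V E k = 1 \<longleftrightarrow> (\<exists>i\<in>{2..k+2}. iso_to_path V E i)"
proof -
  interpret connected_simple_graph V E
    using assms(1,2) by unfold_locales
  show ?thesis
    using dim_kf_eq_1_iff_truncated_resolving_vertex truncated_resolving_vertex_iff_path assms(3)
    by simp
qed

end
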